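(* If $\Delta(w)=\emptyset$ for some $w\in\mathbb Z_{d,\ell}$, then $\kappa=1$ and $w=-\mu_1$.
   Context: Let $\mathbf K$ be a field and $\ell\geq 2$ an integer. Let $L=a_n\phi_\ell^n+\dots+a_0$ with $n\geq1$, $a_i\in\mathbf K[z]$, $a_0a_n\neq0$, where $\phi_\ell(f)(z)=f(z^\ell)$. Let $\mathcal P(L)=\{(\ell^i,j): 0\le i\le n,\ j\in\operatorname{supp} a_i\}$. The Newton polygon of $L$ is the convex hull of $\{(\ell^i,j): 0\le i\le n,\ j\geq\operatorname{val} a_i\}\subset\mathbb R^2$; its non-vertical edges have pairwise distinct slopes $\mu_1<\dots<\mu_\kappa$. Let $d\geq1$ be a common multiple of the denominators of the $\mu_k$ and $\mathbb Z_{d,\ell}=\bigcup_{i\geq0}\frac{1}{d\ell^i}\mathbb Z$. Define $\psi(v)=\min\{v\ell^i+j:(\ell^i,j)\in\mathcal P(L)\}$ and $\Delta(w)=\left\{\frac{\psi(w)-\beta}{\ell^\alpha}:(\ell^\alpha,\beta)\in\mathcal P(L)\right\}\setminus\{w\}$. *)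

theory Defs
  imports "HOL-Analysis.Analysis" "HOL-Computational_Algebra.Polynomial"
begin

text \<open>The operator L = a_n phi_l^n + ... + a_0 is represented by its coefficient
  sequence a :: nat => 'a poly (only a 0, ..., a n matter) together with l and n.\<close>

definition supp_pts :: "nat \<Rightarrow> nat \<Rightarrow> (nat \<Rightarrow> 'a::zero poly) \<Rightarrow> (real \<times> real) set" where
  "supp_pts l n a = {(real l ^ i, real j) | i j. i \<le> n \<and> coeff (a i) j \<noteq> 0}"

definition pval :: "'a::zero poly \<Rightarrow> nat" where
  "pval p = (LEAST j. coeff p j \<noteq> 0)"

text \<open>Newton polygon: convex hull of {(l^i, j) : 0 <= i <= n, j >= val a_i}
  (a zero a_i has valuation +infinity and contributes no points).\<close>
definition newton_polygon :: "nat \<Rightarrow> nat \<Rightarrow> (nat \<Rightarrow> 'a::zero poly) \<Rightarrow> (real \<times> real) set" where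
  "newton_polygon l n a = convex hull
     {(real l ^ i, y) | i y. i \<le> n \<and> a i \<noteq> 0 \<and> real (pval (a i)) \<le> y}"

definition newton_slopes :: "nat \<Rightarrow> nat \<Rightarrow> (nat \<Rightarrow> 'a::zero poly) \<Rightarrow> real set" where
  "newton_slopes l n a = {(snd q - snd p) / (fst q - fst p) | F p q.
      F face_of newton_polygon l n a \<and> aff_dim F = 1 \<and> p \<in> F \<and> q \<in> F \<and> fst p \<noteq> fst q}"

definition psi :: "nat \<Rightarrow> nat \<Rightarrow> (nat \<Rightarrow> 'a::zero poly) \<Rightarrow> real \<Rightarrow> real" where
  "psi l n a v = Min ((\<lambda>(x, y). v * x + y) ` supp_pts l n a)"

definition Delta :: "nat \<Rightarrow> nat \<Rightarrow> (nat \<Rightarrow> 'a::zero poly) \<Rightarrow> real \<Rightarrow> real set" where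
  "Delta l n a w = ((\<lambda>(x, y). (psi l n a w - y) / x) ` supp_pts l n a) - {w}"

definition Zdl :: "nat \<Rightarrow> nat \<Rightarrow> real set" where
  "Zdl d l = {of_int k / (real d * real l ^ i) | k i. True}"

end

theory Submission
  imports Defs
begin

text \<open>If \<open>\<Delta>(w)\<close> is empty, every \<open>(x, y) \<in> \<P>(L)\<close> satisfies \<open>(\<psi>(w) - y) / x = w\<close>, i.e. lies on
  the line \<open>w x + y = \<psi>(w)\<close>. In particular the lowest points \<open>(\<ell>^i, val a_i)\<close> are collinear, so
  the Newton polygon is the half-strip above the segment joining \<open>(1, val a_0)\<close> and
  \<open>(\<ell>^n, val a_n)\<close>; its only non-vertical edge is that segment, of slope \<open>-w\<close>.\<close>

definition half_strip :: "real \<Rightarrow> real \<Rightarrow> real \<Rightarrow> real \<Rightarrow> (real \<times> real) set" where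
  "half_strip x0 x1 w c = {z. x0 \<le> fst z \<and> fst z \<le> x1 \<and> c \<le> w * fst z + snd z}"

definition edge_slopes :: "(real \<times> real) set \<Rightarrow> real set" where
  "edge_slopes S = {(snd q - snd p) / (fst q - fst p) | F p q.
      F face_of S \<and> aff_dim F = 1 \<and> p \<in> F \<and> q \<in> F \<and> fst p \<noteq> fst q}"

lemma newton_slopes_eq_edge_slopes:
  "newton_slopes l n a = edge_slopes (newton_polygon l n a)"
  unfolding newton_slopes_def edge_slopes_def ..

lemma coeff_pval_nonzero:
  assumes "p \<noteq> 0"
  shows "coeff p (pval p) \<noteq> 0"
  unfolding pval_def by (rule LeastI_ex) (use assms in \<open>auto simp: poly_eq_iff\<close>)

lemma Delta_empty_imp_on_line:
  assumes "l > 0" and "Delta l n a w = {}" and "(x, y) \<in> supp_pts l n a"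
  shows "w * x + y = psi l n a w"
proof -
  have "x > 0" using assms(1,3) unfolding supp_pts_def by auto
  moreover have "(psi l n a w - y) / x = w"
    using assms(2,3) unfolding Delta_def by blast
  ultimately show ?thesis by (simp add: field_simps)
qed

lemma Delta_empty_imp_pval_on_line:
  assumes "l > 0" and "Delta l n a w = {}" and "i \<le> n" and "a i \<noteq> 0"
  shows "w * real l ^ i + real (pval (a i)) = psi l n a w"
  using assms coeff_pval_nonzero[OF assms(4)]
  by (intro Delta_empty_imp_on_line) (auto simp: supp_pts_def)

lemma convex_half_strip: "convex (half_strip x0 x1 w c)"
proof -
  have "half_strip x0 x1 w c =
      {z. (1, 0) \<bullet> z \<ge> x0} \<inter> {z. (1, 0) \<bullet> z \<le> x1} \<inter> {z. (w, 1) \<bullet> z \<ge> c}"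
    by (auto simp: half_strip_def inner_prod_def)
  then show ?thesis
    by (simp add: convex_Int convex_halfspace_ge convex_halfspace_le)
qed

lemma convex_hull_eq_half_strip:
  assumes "x0 < x1"
    and "\<And>y. c \<le> w * x0 + y \<Longrightarrow> (x0, y) \<in> S"
    and "\<And>y. c \<le> w * x1 + y \<Longrightarrow> (x1, y) \<in> S"
    and "S \<subseteq> half_strip x0 x1 w c"
  shows "convex hull S = half_strip x0 x1 w c"
proof
  show "convex hull S \<subseteq> half_strip x0 x1 w c"
    using assms(4) convex_half_strip by (rule hull_minimal)
next
  show "half_strip x0 x1 w c \<subseteq> convex hull S"
  proof
    fix z assume "z \<in> half_strip x0 x1 w c"
    then obtain x y where z: "z = (x, y)" "x0 \<le> x" "x \<le> x1" "c \<le> w * x + y"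
      unfolding half_strip_def by (cases z) auto
    define t where "t = w * x + y - c"
    define lam where "lam = (x - x0) / (x1 - x0)"
    have lam: "0 \<le> lam" "lam \<le> 1" "lam * (x1 - x0) = x - x0"
      using assms(1) z unfolding lam_def by (simp_all add: field_simps)
    then have x: "(1 - lam) * x0 + lam * x1 = x" by (simp add: algebra_simps)
    \<comment> \<open>\<open>z\<close> lies on the segment between the two ray points at height \<open>t\<close> above the line\<close>
    define p where "p = (x0, c - w * x0 + t)"
    define q where "q = (x1, c - w * x1 + t)"
    have "p \<in> convex hull S" "q \<in> convex hull S"
      using assms(2,3) z(4) unfolding p_def q_def t_def by (auto intro: hull_inc)
    moreover have "(1 - lam) * (c - w * x0 + t) + lam * (c - w * x1 + t) = y"
    proof -
      have "(1 - lam) * (c - w * x0 + t) + lam * (c - w * x1 + t)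
          = c + t - w * ((1 - lam) * x0 + lam * x1)" by (simp add: algebra_simps)
      then show ?thesis using x unfolding t_def by simp
    qed
    then have "z = (1 - lam) *\<^sub>R p + lam *\<^sub>R q"
      using x unfolding z p_def q_def by simp
    ultimately show "z \<in> convex hull S"
      using convexD[OF convex_convex_hull, of p S q "1 - lam" lam] lam by simp
  qed
qed

lemma bottom_edge_face_of_half_strip:
  "half_strip x0 x1 w c \<inter> {z. w * fst z + snd z = c} face_of half_strip x0 x1 w c"
proof -
  have "half_strip x0 x1 w c \<inter> {z. w * fst z + snd z = c}
      = half_strip x0 x1 w c \<inter> {z. (-w, -1) \<bullet> z = - c}"
    by (auto simp: inner_prod_def)
  also have "\<dots> face_of half_strip x0 x1 w c"
    by (rule face_of_Int_supporting_hyperplane_le[OF convex_half_strip])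
       (auto simp: half_strip_def inner_prod_def)
  finally show ?thesis .
qed

lemma aff_dim_bottom_edge_of_half_strip:
  assumes "x0 < x1"
  shows "aff_dim (half_strip x0 x1 w c \<inter> {z. w * fst z + snd z = c}) = 1"
    (is "aff_dim ?E = 1")
proof -
  have p: "(x0, c - w * x0) \<in> ?E" and q: "(x1, c - w * x1) \<in> ?E"
    using assms by (auto simp: half_strip_def)
  have "collinear ?E"
    unfolding collinear_def
  proof (intro exI[of _ "(1, -w)"] ballI)
    fix p q assume "p \<in> ?E" "q \<in> ?E"
    then have "w * fst p + snd p = c" "w * fst q + snd q = c" by auto
    then have "p - q = (fst p - fst q) *\<^sub>R (1, -w)"
      by (simp add: prod_eq_iff algebra_simps)
    then show "\<exists>k. p - q = k *\<^sub>R (1, -w)" ..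
  qed
  then have "aff_dim ?E \<le> 1" by (simp add: collinear_aff_dim)
  moreover have "aff_dim ?E \<noteq> -1" using p by (auto simp only: aff_dim_empty[symmetric])
  moreover have "aff_dim ?E \<noteq> 0"
  proof
    assume "aff_dim ?E = 0"
    then obtain e where "?E = {e}" by (auto simp only: aff_dim_eq_0)
    then show False using p q assms by auto
  qed
  moreover have "aff_dim ?E \<ge> -1" by (rule aff_dim_geq)
  ultimately show ?thesis by linarith
qed

text \<open>A point of a face strictly above the line is the midpoint of a vertical segment in the
  half-strip, so the face contains a vertical direction; a collinear face is then vertical.\<close>
lemma face_of_half_strip_on_line:
  assumes F: "F face_of half_strip x0 x1 w c" "collinear F"
    and "z \<in> F" "z' \<in> F" "fst z \<noteq> fst z'"
  shows "w * fst z + snd z = c"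
proof (rule ccontr)
  assume "w * fst z + snd z \<noteq> c"
  moreover have zS: "z \<in> half_strip x0 x1 w c" using F(1) assms(3) face_of_imp_subset by blast
  ultimately have e: "w * fst z + snd z - c > 0" by (auto simp: half_strip_def)
  define v :: "real \<times> real" where "v = (0, w * fst z + snd z - c)"
  have "z - v \<in> half_strip x0 x1 w c" "z + v \<in> half_strip x0 x1 w c"
    using zS e by (auto simp: half_strip_def v_def)
  moreover have "z = midpoint (z - v) (z + v)" "z - v \<noteq> z + v"
    using e by (simp_all add: v_def midpoint_def prod_eq_iff)
  then have "z \<in> open_segment (z - v) (z + v)" by (metis midpoint_in_open_segment)
  ultimately have "z + v \<in> F" using face_ofD[OF F(1)] assms(3) by blast
  obtain u where u: "\<forall>x\<in>F. \<forall>y\<in>F. \<exists>k. x - y = k *\<^sub>R u"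
    using F(2) unfolding collinear_def by blast
  obtain k1 where "v = k1 *\<^sub>R u" using u \<open>z + v \<in> F\<close> assms(3) by fastforce
  then have "fst u = 0" using e by (auto simp: v_def prod_eq_iff)
  moreover obtain k2 where "z' - z = k2 *\<^sub>R u" using u assms(3,4) by blast
  ultimately show False using assms(5) by (simp add: prod_eq_iff)
qed

lemma edge_slopes_half_strip:
  assumes "x0 < x1"
  shows "edge_slopes (half_strip x0 x1 w c) = {-w}"
proof
  let ?E = "half_strip x0 x1 w c \<inter> {z. w * fst z + snd z = c}"
  have "(x0, c - w * x0) \<in> ?E" "(x1, c - w * x1) \<in> ?E"
    using assms by (auto simp: half_strip_def)
  moreover have "((c - w * x1) - (c - w * x0)) / (x1 - x0) = -w"
    using assms by (simp add: field_simps)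
  ultimately show "{-w} \<subseteq> edge_slopes (half_strip x0 x1 w c)"
    using assms bottom_edge_face_of_half_strip aff_dim_bottom_edge_of_half_strip
    unfolding edge_slopes_def
    by (intro subsetI CollectI exI[of _ ?E] exI[of _ "(x0, c - w * x0)"] exI[of _ "(x1, c - w * x1)"])
       auto
next
  show "edge_slopes (half_strip x0 x1 w c) \<subseteq> {-w}"
  proof
    fix m assume "m \<in> edge_slopes (half_strip x0 x1 w c)"
    then obtain F p q where F: "F face_of half_strip x0 x1 w c" "aff_dim F = 1"
      and pq: "p \<in> F" "q \<in> F" "fst p \<noteq> fst q"
      and m: "m = (snd q - snd p) / (fst q - fst p)"
      unfolding edge_slopes_def by blast
    have "collinear F" using F(2) by (simp add: collinear_aff_dim)
    then have "w * fst p + snd p = c" "w * fst q + snd q = c"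
      using face_of_half_strip_on_line[OF F(1)] pq by metis+
    then have "snd q - snd p = -w * (fst q - fst p)" by (simp add: algebra_simps)
    then show "m \<in> {-w}" using m pq(3) by simp
  qed
qed

lemma newton_polygon_eq_half_strip:
  assumes "l \<ge> 2" and "n \<ge> 1" and "a 0 \<noteq> 0" and "a n \<noteq> 0" and "Delta l n a w = {}"
  shows "newton_polygon l n a = half_strip 1 (real l ^ n) w (psi l n a w)"
proof -
  have l: "real l > 1" using assms(1) by simp
  have on_line: "w * real l ^ i + real (pval (a i)) = psi l n a w" if "i \<le> n" "a i \<noteq> 0" for i
    using assms(1,5) that by (intro Delta_empty_imp_pval_on_line) auto
  show ?thesis
    unfolding newton_polygon_def
  proof (rule convex_hull_eq_half_strip)
    show "1 < real l ^ n" using l assms(2) by (simp add: one_less_power)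
  next
    fix y assume "psi l n a w \<le> w * 1 + y"
    then show "(1, y) \<in> {(real l ^ i, y) | i y. i \<le> n \<and> a i \<noteq> 0 \<and> real (pval (a i)) \<le> y}"
      using on_line[of 0] assms(3) by (intro CollectI exI[of _ 0] exI[of _ y]) auto
  next
    fix y assume "psi l n a w \<le> w * real l ^ n + y"
    then show "(real l ^ n, y) \<in> {(real l ^ i, y) | i y. i \<le> n \<and> a i \<noteq> 0 \<and> real (pval (a i)) \<le> y}"
      using on_line[of n] assms(4) by (intro CollectI exI[of _ n] exI[of _ y]) auto
  next
    show "{(real l ^ i, y) | i y. i \<le> n \<and> a i \<noteq> 0 \<and> real (pval (a i)) \<le> y}
        \<subseteq> half_strip 1 (real l ^ n) w (psi l n a w)"
    proof (clarify)
      fix i y assume i: "i \<le> n" "a i \<noteq> 0" and "real (pval (a i)) \<le> y"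
      then have "psi l n a w \<le> w * real l ^ i + y" using on_line[OF i] by linarith
      moreover have "real l ^ i \<le> real l ^ n" using l i(1) by (simp add: power_increasing)
      ultimately show "(real l ^ i, y) \<in> half_strip 1 (real l ^ n) w (psi l n a w)"
        using l by (simp add: half_strip_def)
    qed
  qed
qed

theorem mainTheorem14:
  fixes a :: "nat \<Rightarrow> 'a::field poly" and l n d :: nat and w :: real
  assumes "l \<ge> 2" and "n \<ge> 1" and "a 0 \<noteq> 0" and "a n \<noteq> 0"
    and "d \<ge> 1"
    and "\<forall>\<mu>\<in>newton_slopes l n a. \<exists>k::int. real d * \<mu> = of_int k"
    and "w \<in> Zdl d l"
    and "Delta l n a w = {}"
  shows "card (newton_slopes l n a) = 1 \<and> w = - Min (newton_slopes l n a)"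
proof -
  have "1 < real l ^ n" using assms(1,2) by (simp add: one_less_power)
  then have "newton_slopes l n a = {-w}"
    using newton_polygon_eq_half_strip[OF assms(1-4,8)] edge_slopes_half_strip
    by (simp add: newton_slopes_eq_edge_slopes)
  then show ?thesis by simp
qed

end
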